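(* Let $G$ be a non-abelian finite $p$-group such that $Z(G)$ has rank $r$. Suppose $\rho_1,\dots,\rho_k$ are irreducible ordinary representations of $G$ such that $\bigoplus_{i=1}^k\rho_i$ is a faithful projective representation of $G$. (i) If $Z(G)\not\cong(\mathbb{Z}/2\mathbb{Z})^2$ and $Z(G)\not\cong(\mathbb{Z}/2\mathbb{Z})^4$, then $k>r$. (ii) If $Z(G)\cong(\mathbb{Z}/2\mathbb{Z})^2$ or $(\mathbb{Z}/2\mathbb{Z})^4$, then $k>r-1$.
   Context: Rank means minimal number of generators. An ordinary representation $\rho$ of $G$ is faithful as a projective representation if the only $g\in G$ with $\rho(g)$ a scalar matrix is $g=1$. *)

theory Defs
  imports "HOL-Algebra.Algebra" "Jordan_Normal_Form.Matrix"
begin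

definition center :: "('g, 'b) monoid_scheme \<Rightarrow> 'g set" where
  "center G = {z \<in> carrier G. \<forall>g \<in> carrier G. z \<otimes>\<^bsub>G\<^esub> g = g \<otimes>\<^bsub>G\<^esub> z}"

definition subgroup_rank :: "('g, 'b) monoid_scheme \<Rightarrow> 'g set \<Rightarrow> nat" where
  "subgroup_rank G H = (LEAST n. \<exists>S. S \<subseteq> H \<and> finite S \<and> card S = n \<and> generate G S = H)"

definition p_group :: "('g, 'b) monoid_scheme \<Rightarrow> nat \<Rightarrow> bool" where
  "p_group G p \<longleftrightarrow> group G \<and> Factorial_Ring.prime p \<and> finite (carrier G) \<and> (\<exists>m. card (carrier G) = p ^ m)"

definition is_rep :: "('g, 'b) monoid_scheme \<Rightarrow> nat \<Rightarrow> ('g \<Rightarrow> complex mat) \<Rightarrow> bool" where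
  "is_rep G n \<rho> \<longleftrightarrow> \<rho> \<one>\<^bsub>G\<^esub> = 1\<^sub>m n \<and> (\<forall>g \<in> carrier G. \<rho> g \<in> carrier_mat n n) \<and>
     (\<forall>g \<in> carrier G. \<forall>h \<in> carrier G. \<rho> (g \<otimes>\<^bsub>G\<^esub> h) = \<rho> g * \<rho> h)"

definition rep_deg :: "('g, 'b) monoid_scheme \<Rightarrow> ('g \<Rightarrow> complex mat) \<Rightarrow> nat" where
  "rep_deg G \<rho> = dim_row (\<rho> \<one>\<^bsub>G\<^esub>)"

definition is_subspace :: "nat \<Rightarrow> complex vec set \<Rightarrow> bool" where
  "is_subspace n W \<longleftrightarrow> W \<subseteq> carrier_vec n \<and> 0\<^sub>v n \<in> W \<and>
     (\<forall>v \<in> W. \<forall>w \<in> W. v + w \<in> W) \<and> (\<forall>c. \<forall>v \<in> W. c \<cdot>\<^sub>v v \<in> W)"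

definition irreducible_rep :: "('g, 'b) monoid_scheme \<Rightarrow> ('g \<Rightarrow> complex mat) \<Rightarrow> bool" where
  "irreducible_rep G \<rho> \<longleftrightarrow> (let n = rep_deg G \<rho> in
     is_rep G n \<rho> \<and> n > 0 \<and>
     (\<forall>W. is_subspace n W \<and> (\<forall>g \<in> carrier G. \<forall>w \<in> W. \<rho> g *\<^sub>v w \<in> W)
          \<longrightarrow> W = {0\<^sub>v n} \<or> W = carrier_vec n))"

definition direct_sum_rep :: "('g \<Rightarrow> complex mat) list \<Rightarrow> 'g \<Rightarrow> complex mat" where
  "direct_sum_rep \<rho>s g = diag_block_mat (map (\<lambda>\<rho>. \<rho> g) \<rho>s)"

definition is_scalar_mat :: "complex mat \<Rightarrow> bool" where
  "is_scalar_mat M \<longleftrightarrow> (\<exists>c. M = c \<cdot>\<^sub>m 1\<^sub>m (dim_row M))"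

definition proj_faithful :: "('g, 'b) monoid_scheme \<Rightarrow> ('g \<Rightarrow> complex mat) \<Rightarrow> bool" where
  "proj_faithful G \<rho> \<longleftrightarrow> (\<forall>g \<in> carrier G. is_scalar_mat (\<rho> g) \<longrightarrow> g = \<one>\<^bsub>G\<^esub>)"

abbreviation Z2 :: "int monoid" where "Z2 \<equiv> integer_mod_group 2"

end

theory Submission
  imports Defs "Jordan_Normal_Form.Spectral_Radius"
begin

(* By Schur's lemma every irreducible \<rho>\<^sub>i maps a central element z to a scalar \<chi>\<^sub>i(z),
   and \<chi>\<^sub>i is a linear character of Z(G). The direct sum maps z to a scalar iff all
   \<chi>\<^sub>i(z) agree, so projective faithfulness says that the k - 1 characters \<chi>\<^sub>i / \<chi>\<^sub>1 (i \<ge> 2)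
   have trivial common kernel on Z(G). A character of a p-group has cyclic image, so Z(G) is
   generated by one preimage of a generator of that image together with the kernel; by
   induction on the number of characters, Z(G) is generated by k - 1 elements. Hence k > r
   for every centre, which gives both (i) and (ii); non-commutativity only excludes k = 0. *)

lemma (in group) center_subgroup: "subgroup (center G) G"
proof (rule subgroupI)
  show "center G \<subseteq> carrier G" unfolding center_def by blast
  have "\<one> \<in> center G" unfolding center_def by simp
  then show "center G \<noteq> {}" by blast
next
  fix a b assume a: "a \<in> center G" and b: "b \<in> center G"
  have ab: "a \<in> carrier G" "b \<in> carrier G" using a b unfolding center_def by blast+
  have "a \<otimes> b \<otimes> g = g \<otimes> (a \<otimes> b)" if g: "g \<in> carrier G" for g
  proof -
    have "a \<otimes> g = g \<otimes> a" "b \<otimes> g = g \<otimes> b" using a b g unfolding center_def by blast+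
    then show ?thesis using ab g by (metis m_assoc)
  qed
  then show "a \<otimes> b \<in> center G" using ab unfolding center_def by blast
next
  fix a assume a: "a \<in> center G"
  have ac: "a \<in> carrier G" using a unfolding center_def by blast
  have "inv a \<otimes> g = g \<otimes> inv a" if g: "g \<in> carrier G" for g
  proof -
    have "a \<otimes> inv g = inv g \<otimes> a" using a inv_closed[OF g] unfolding center_def by blast
    then have "inv (inv g \<otimes> a) = inv (a \<otimes> inv g)" by simp
    then show ?thesis using g ac by (simp add: inv_mult_group)
  qed
  then show "inv a \<in> center G" using ac unfolding center_def by blast
qed

lemma is_subspace_eigenspace:
  assumes A: "A \<in> carrier_mat n n"
  shows "is_subspace n {v \<in> carrier_vec n. A *\<^sub>v v = c \<cdot>\<^sub>v v}"
  using A unfolding is_subspace_def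
  by (auto simp: mult_add_distrib_mat_vec[OF A] smult_add_distrib_vec mult_mat_vec[OF A]
      smult_smult_assoc mult.commute)

lemma commuting_mat_preserves_eigenvector:
  fixes A B :: "'a :: field mat"
  assumes A: "A \<in> carrier_mat n n" and B: "B \<in> carrier_mat n n" and AB: "A * B = B * A"
    and v: "v \<in> carrier_vec n" "A *\<^sub>v v = c \<cdot>\<^sub>v v"
  shows "A *\<^sub>v (B *\<^sub>v v) = c \<cdot>\<^sub>v (B *\<^sub>v v)"
proof -
  have "A *\<^sub>v (B *\<^sub>v v) = B *\<^sub>v (A *\<^sub>v v)"
    using A B v AB by (metis assoc_mult_mat_vec)
  also have "\<dots> = c \<cdot>\<^sub>v (B *\<^sub>v v)" using B v by (simp add: mult_mat_vec)
  finally show ?thesis .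
qed

lemma mat_eq_smult_one_if_all_eigenvectors:
  fixes A :: "'a :: field mat"
  assumes A: "A \<in> carrier_mat n n" and eig: "\<And>v. v \<in> carrier_vec n \<Longrightarrow> A *\<^sub>v v = c \<cdot>\<^sub>v v"
  shows "A = c \<cdot>\<^sub>m 1\<^sub>m n"
proof (rule eq_matI)
  fix i j assume i: "i < dim_row (c \<cdot>\<^sub>m 1\<^sub>m n)" and j: "j < dim_col (c \<cdot>\<^sub>m 1\<^sub>m n)"
  have "(A *\<^sub>v unit_vec n j) $ i = (c \<cdot>\<^sub>v unit_vec n j) $ i"
    using eig[of "unit_vec n j"] by simp
  then show "A $$ (i, j) = (c \<cdot>\<^sub>m 1\<^sub>m n) $$ (i, j)" using i j A by auto
qed (use A in auto)

lemma irreducible_rep_central_scalar: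
  assumes irr: "irreducible_rep G \<rho>" and z: "z \<in> center G"
  shows "\<exists>c. \<rho> z = c \<cdot>\<^sub>m 1\<^sub>m (rep_deg G \<rho>)"
proof -
  define n where "n = rep_deg G \<rho>"
  have rep: "is_rep G n \<rho>" and n: "n > 0"
    and irrW: "\<And>W. is_subspace n W \<Longrightarrow> \<forall>g\<in>carrier G. \<forall>w\<in>W. \<rho> g *\<^sub>v w \<in> W
                \<Longrightarrow> W = {0\<^sub>v n} \<or> W = carrier_vec n"
    using irr unfolding irreducible_rep_def n_def Let_def by auto
  have zG: "z \<in> carrier G" and zc: "\<And>g. g \<in> carrier G \<Longrightarrow> z \<otimes>\<^bsub>G\<^esub> g = g \<otimes>\<^bsub>G\<^esub> z"
    using z unfolding center_def by blast+
  have car: "\<And>g. g \<in> carrier G \<Longrightarrow> \<rho> g \<in> carrier_mat n n"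
    and hom: "\<And>g h. g \<in> carrier G \<Longrightarrow> h \<in> carrier G \<Longrightarrow> \<rho> (g \<otimes>\<^bsub>G\<^esub> h) = \<rho> g * \<rho> h"
    using rep unfolding is_rep_def by auto
  have A: "\<rho> z \<in> carrier_mat n n" using car zG .
  obtain c where "eigenvalue (\<rho> z) c" using spectrum_non_empty[OF A n] unfolding spectrum_def by auto
  then obtain v where v: "v \<in> carrier_vec n" "v \<noteq> 0\<^sub>v n" "\<rho> z *\<^sub>v v = c \<cdot>\<^sub>v v"
    unfolding eigenvalue_def eigenvector_def using A by auto
  define W where "W = {w \<in> carrier_vec n. \<rho> z *\<^sub>v w = c \<cdot>\<^sub>v w}"
  have "\<rho> z * \<rho> g = \<rho> g * \<rho> z" if "g \<in> carrier G" for g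
    using hom zc zG that by metis
  then have "\<forall>g\<in>carrier G. \<forall>w\<in>W. \<rho> g *\<^sub>v w \<in> W"
    using commuting_mat_preserves_eigenvector[OF A car] car unfolding W_def
    by (auto intro: mult_mat_vec_carrier[OF car])
  then have "W = carrier_vec n"
    using irrW[OF is_subspace_eigenspace[OF A, of c, folded W_def]] v unfolding W_def by auto
  then have "\<rho> z = c \<cdot>\<^sub>m 1\<^sub>m n"
    using mat_eq_smult_one_if_all_eigenvectors[OF A] unfolding W_def by blast
  then show ?thesis unfolding n_def by blast
qed

lemma diag_block_mat_smult_one:
  fixes c :: "'a :: semiring_1"
  assumes "\<forall>A \<in> set As. \<exists>m. A = c \<cdot>\<^sub>m 1\<^sub>m m"
  shows "diag_block_mat As = c \<cdot>\<^sub>m 1\<^sub>m (dim_row (diag_block_mat As))"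
  using assms
proof (induction As)
  case Nil
  then show ?case by (auto intro!: eq_matI)
next
  case (Cons A As)
  obtain m where A: "A = c \<cdot>\<^sub>m 1\<^sub>m m" using Cons.prems by auto
  define B where "B = diag_block_mat As"
  have B: "B = c \<cdot>\<^sub>m 1\<^sub>m (dim_row B)" using Cons B_def by auto
  then have "dim_col B = dim_row B" by (metis index_smult_mat(3) index_one_mat(3))
  moreover have "\<And>i j. i < dim_row B \<Longrightarrow> j < dim_row B \<Longrightarrow> B $$ (i,j) = (if i = j then c else 0)"
    by (subst B, simp)
  ultimately show ?case
    unfolding diag_block_mat.simps Let_def B_def[symmetric] by (intro eq_matI) (auto simp: A)
qed

lemma power_gcd_eq_1:
  fixes z :: "'a :: monoid_mult"
  assumes "z ^ m = 1" "z ^ n = 1"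
  shows "z ^ gcd m n = 1"
proof (cases "m = 0")
  case False
  then obtain x y where "m * x = n * y + gcd m n" using bezout_nat by blast
  then have "z ^ (m * x) = z ^ (n * y) * z ^ gcd m n" by (simp add: power_add)
  then show ?thesis using assms by (simp add: power_mult)
qed (use assms in simp)

lemma inj_on_power_prime_power_order:
  fixes z :: "'a :: idom"
  assumes p: "Factorial_Ring.prime p" and z: "z ^ (p ^ a) = 1"
    and minimal: "\<forall>b<a. z ^ (p ^ b) \<noteq> 1"
  shows "inj_on (\<lambda>j. z ^ j) {..<p ^ a}"
proof -
  have no_period: "z ^ d \<noteq> 1" if d: "0 < d" "d < p ^ a" for d
  proof
    assume "z ^ d = 1"
    then have "z ^ gcd d (p ^ a) = 1" using power_gcd_eq_1 z by blast
    moreover obtain b where b: "b \<le> a" "gcd d (p ^ a) = p ^ b"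
      using divides_primepow_nat[OF p, of "gcd d (p ^ a)" a] by auto
    moreover have "b \<noteq> a" using b d by (metis gcd_dvd1 dvd_imp_le not_le)
    ultimately show False using minimal b by auto
  qed
  have "z \<noteq> 0" using z prime_gt_0_nat[OF p] by (auto simp: power_0_left)
  have "z ^ i \<noteq> z ^ j" if "i < j" "j < p ^ a" for i j
  proof
    assume eq: "z ^ i = z ^ j"
    have "z ^ i * z ^ (j - i) = z ^ j" using that by (simp flip: power_add)
    then have "z ^ i * z ^ (j - i) = z ^ i * 1" using eq by simp
    then show False using no_period[of "j - i"] that \<open>z \<noteq> 0\<close> by simp
  qed
  then show ?thesis by (metis inj_onI lessThan_iff linorder_neqE_nat)
qed

lemma roots_unity_eq_powers:
  fixes z :: complex
  assumes n: "n > 0" and z: "z ^ n = 1" and inj: "inj_on (\<lambda>j. z ^ j) {..<n}"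
  shows "{w. w ^ n = 1} = (\<lambda>j. z ^ j) ` {..<n}"
proof -
  have "finite {w::complex. w ^ n = 1}" using n by (intro finite_roots_unity) simp
  moreover have "(z ^ j) ^ n = 1" for j using z by (metis mult.commute power_mult power_one)
  then have "(\<lambda>j. z ^ j) ` {..<n} \<subseteq> {w. w ^ n = 1}" by auto
  moreover have "card ((\<lambda>j. z ^ j) ` {..<n}) = card {w::complex. w ^ n = 1}"
    using card_image[OF inj] card_roots_unity_eq[OF n] by simp
  ultimately show ?thesis by (rule card_subset_eq[symmetric])
qed

definition multiplicative_on ::
    "('g, 'b) monoid_scheme \<Rightarrow> 'g set \<Rightarrow> ('g \<Rightarrow> 'a :: monoid_mult) \<Rightarrow> bool" where
  "multiplicative_on G H f \<longleftrightarrow> f \<one>\<^bsub>G\<^esub> = 1 \<and> (\<forall>x\<in>H. \<forall>y\<in>H. f (x \<otimes>\<^bsub>G\<^esub> y) = f x * f y)"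

lemma multiplicative_on_divide:
  fixes f g :: "'g \<Rightarrow> 'a :: field"
  assumes "multiplicative_on G H f" "multiplicative_on G H g"
  shows "multiplicative_on G H (\<lambda>x. f x / g x)"
  using assms unfolding multiplicative_on_def by (simp add: times_divide_times_eq)

lemma (in group) subgroup_nat_pow_closed:
  assumes "subgroup H G" "h \<in> H"
  shows "h [^] (n::nat) \<in> H"
  using subgroup_int_pow_closed[OF assms, of "int n"] by (simp add: int_pow_int)

lemma (in group) multiplicative_on_nat_pow:
  assumes f: "multiplicative_on G H f" and H: "subgroup H G" and h: "h \<in> H"
  shows "f (h [^] (n::nat)) = f h ^ n"
proof (induction n)
  case (Suc n)
  then show ?case using f subgroup_nat_pow_closed[OF H h, of n] h
    unfolding multiplicative_on_def by (simp add: power_Suc2 del: power_Suc)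
qed (use f in \<open>simp add: multiplicative_on_def\<close>)

lemma (in group) multiplicative_on_inv:
  assumes f: "multiplicative_on G H f" and H: "subgroup H G" and h: "h \<in> H"
  shows "f h * f (inv h) = 1"
proof -
  have "h \<otimes> inv h = \<one>" using H h by (simp add: subgroup.mem_carrier)
  then show ?thesis using f H h unfolding multiplicative_on_def by (metis subgroup.m_inv_closed)
qed

lemma (in group) subgroup_multiplicative_kernel:
  assumes f: "multiplicative_on G H f" and H: "subgroup H G"
  shows "subgroup {x \<in> H. f x = 1} G"
proof (rule subgroupI)
  show "{x \<in> H. f x = 1} \<subseteq> carrier G" using H subgroup.subset by blast
  show "{x \<in> H. f x = 1} \<noteq> {}"
    using f H subgroup.one_closed unfolding multiplicative_on_def by blast
next
  fix a assume "a \<in> {x \<in> H. f x = 1}"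
  then have a: "a \<in> H" "f a = 1" by auto
  with multiplicative_on_inv[OF f H a(1)] H show "inv a \<in> {x \<in> H. f x = 1}"
    by (simp add: subgroup.m_inv_closed)
next
  fix a b assume "a \<in> {x \<in> H. f x = 1}" "b \<in> {x \<in> H. f x = 1}"
  then show "a \<otimes> b \<in> {x \<in> H. f x = 1}"
    using f H unfolding multiplicative_on_def by (simp add: subgroup.m_closed)
qed

lemma (in group) generate_insert_kernel:
  assumes H: "subgroup H G" and f: "multiplicative_on G H f" and h: "h \<in> H"
    and powers: "\<forall>x\<in>H. \<exists>j. f x = f h ^ j"
    and S: "generate G S = {x \<in> H. f x = 1}"
  shows "generate G (insert h S) = H"
proof
  have SH: "S \<subseteq> H" using S generate.incl[of _ S G] by blast
  then show "generate G (insert h S) \<subseteq> H" using generate_subgroup_incl[OF _ H] h by blast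
  have hS: "insert h S \<subseteq> carrier G" using SH h H subgroup.subset by blast
  show "H \<subseteq> generate G (insert h S)"
  proof
    fix x assume x: "x \<in> H"
    obtain j where j: "f x = f h ^ j" using powers x by blast
    define y where "y = x \<otimes> inv (h [^] j)"
    have hj: "h [^] j \<in> H" "inv (h [^] j) \<in> H"
      using subgroup_nat_pow_closed[OF H h] H by (auto simp: subgroup.m_inv_closed)
    have "f y = f (h [^] j) * f (inv (h [^] j))"
      using f x hj j multiplicative_on_nat_pow[OF f H h] unfolding y_def multiplicative_on_def
      by simp
    then have "y \<in> generate G S"
      using multiplicative_on_inv[OF f H hj(1)] x hj H unfolding S y_def
      by (simp add: subgroup.m_closed)
    then have "y \<in> generate G (insert h S)" using mono_generate[of S "insert h S"] by blast
    moreover have "h [^] j \<in> generate G (insert h S)"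
      using subgroup_nat_pow_closed[OF generate_is_subgroup[OF hS]] by (simp add: generate.incl)
    moreover have "x = y \<otimes> h [^] j"
      using x hj H unfolding y_def by (simp add: subgroup.mem_carrier m_assoc)
    ultimately show "x \<in> generate G (insert h S)" by (simp add: generate.eng)
  qed
qed

lemma (in group) multiplicative_on_image_cyclic:
  fixes f :: "'a \<Rightarrow> complex"
  assumes order: "Coset.order G = p ^ m" and p: "Factorial_Ring.prime p"
    and H: "subgroup H G" and f: "multiplicative_on G H f"
  shows "\<exists>h\<in>H. \<forall>x\<in>H. \<exists>j. f x = f h ^ j"
proof -
  have root: "f x ^ (p ^ m) = 1" if "x \<in> H" for x
    using multiplicative_on_nat_pow[OF f H that, of "p ^ m"] pow_order_eq_1[of x] f that H order
    unfolding multiplicative_on_def by (simp add: subgroup.mem_carrier)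
  define a where "a x = (LEAST k. f x ^ (p ^ k) = 1)" for x
  \<comment> \<open>\<open>p ^ a x\<close> is the multiplicative order of \<open>f x\<close>; \<open>h\<close> below maximises it\<close>
  have a: "f x ^ (p ^ a x) = 1" if "x \<in> H" for x
    unfolding a_def using root[OF that] by (rule LeastI)
  have "card (carrier G) > 0"
    using order prime_gt_0_nat[OF p] unfolding Coset.order_def by simp
  then have "finite H" using finite_subset[OF subgroup.subset[OF H]] card_ge_0_finite by blast
  moreover have "H \<noteq> {}" using subgroup.one_closed[OF H] by blast
  ultimately have "Max (a ` H) \<in> a ` H" by (intro Max_in) simp_all
  then obtain h where h: "h \<in> H" "a h = Max (a ` H)" by (metis imageE)
  have all: "f x ^ (p ^ a h) = 1" if x: "x \<in> H" for x
  proof -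
    have "a x \<le> a h" using Max_ge[of "a ` H" "a x"] \<open>finite H\<close> x h(2) by simp
    then have "p ^ a x dvd p ^ a h" by (rule le_imp_power_dvd)
    then obtain q where "p ^ a h = p ^ a x * q" by (rule dvdE)
    then show ?thesis using a[OF x] by (simp add: power_mult)
  qed
  have "f h ^ (p ^ b) \<noteq> 1" if "b < a h" for b
    using not_less_Least[of b "\<lambda>k. f h ^ (p ^ k) = 1"] that unfolding a_def by blast
  then have "inj_on (\<lambda>j. f h ^ j) {..<p ^ a h}"
    using inj_on_power_prime_power_order[OF p a[OF h(1)]] by blast
  then have "{w. w ^ (p ^ a h) = 1} = (\<lambda>j. f h ^ j) ` {..<p ^ a h}"
    using roots_unity_eq_powers a[OF h(1)] prime_gt_0_nat[OF p] by simp
  then show ?thesis using all h(1) by blast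
qed

lemma (in group) generating_set_of_separating_multiplicative:
  fixes fs :: "('a \<Rightarrow> complex) list"
  assumes order: "Coset.order G = p ^ m" and p: "Factorial_Ring.prime p"
  shows "subgroup H G \<Longrightarrow> \<forall>f\<in>set fs. multiplicative_on G H f
    \<Longrightarrow> \<forall>x\<in>H. (\<forall>f\<in>set fs. f x = 1) \<longrightarrow> x = \<one>
    \<Longrightarrow> \<exists>S\<subseteq>H. finite S \<and> card S \<le> length fs \<and> generate G S = H"
proof (induction fs arbitrary: H)
  case Nil
  then have "H = {\<one>}" using subgroup.one_closed by fastforce
  then show ?case using generate_empty by (intro exI[of _ "{}"]) auto
next
  case (Cons f fs)
  define K where "K = {x \<in> H. f x = 1}"
  have f: "multiplicative_on G H f" using Cons.prems by simp
  have "subgroup K G" unfolding K_def using subgroup_multiplicative_kernel[OF f Cons.prems(1)] .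
  moreover have "\<forall>g\<in>set fs. multiplicative_on G K g"
    using Cons.prems(2) unfolding K_def multiplicative_on_def by auto
  moreover have "\<forall>x\<in>K. (\<forall>g\<in>set fs. g x = 1) \<longrightarrow> x = \<one>" using Cons.prems(3) K_def by auto
  ultimately obtain S where S: "S \<subseteq> K" "finite S" "card S \<le> length fs" "generate G S = K"
    using Cons.IH by blast
  obtain h where h: "h \<in> H" "\<forall>x\<in>H. \<exists>j. f x = f h ^ j"
    using multiplicative_on_image_cyclic[OF order p Cons.prems(1) f] by blast
  have "generate G (insert h S) = H"
    using generate_insert_kernel[OF Cons.prems(1) f h] S(4) K_def by simp
  moreover have "insert h S \<subseteq> H" using S(1) h K_def by auto
  moreover have "card (insert h S) \<le> length (f # fs)" using S(2,3) by (simp add: card_insert_if)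
  ultimately show ?case using S(2) by blast
qed

lemma (in group) subgroup_rank_le_separating_multiplicative:
  fixes fs :: "('a \<Rightarrow> complex) list"
  assumes "Coset.order G = p ^ m" "Factorial_Ring.prime p" "subgroup H G"
    and "\<forall>f\<in>set fs. multiplicative_on G H f" "\<forall>x\<in>H. (\<forall>f\<in>set fs. f x = 1) \<longrightarrow> x = \<one>"
  shows "subgroup_rank G H \<le> length fs"
proof -
  obtain S where S: "S \<subseteq> H" "finite S" "card S \<le> length fs" "generate G S = H"
    using generating_set_of_separating_multiplicative[OF assms] by blast
  then have "subgroup_rank G H \<le> card S" unfolding subgroup_rank_def by (intro Least_le) blast
  with S(3) show ?thesis by simp
qed

lemma (in group) multiplicative_on_center_rep:
  assumes irr: "irreducible_rep G \<rho>"
  shows "multiplicative_on G (center G) (\<lambda>z. \<rho> z $$ (0,0))"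
proof -
  define n where "n = rep_deg G \<rho>"
  have rep: "is_rep G n \<rho>" and "n > 0"
    using irr unfolding irreducible_rep_def n_def Let_def by auto
  have "\<rho> (z \<otimes> w) $$ (0,0) = \<rho> z $$ (0,0) * \<rho> w $$ (0,0)"
    if zw: "z \<in> center G" "w \<in> center G" for z w
  proof -
    obtain c where c: "\<rho> z = c \<cdot>\<^sub>m 1\<^sub>m n"
      using irreducible_rep_central_scalar[OF irr zw(1)] unfolding n_def by blast
    have "z \<in> carrier G" "w \<in> carrier G" using zw unfolding center_def by blast+
    then have w: "\<rho> w \<in> carrier_mat n n" and "\<rho> (z \<otimes> w) = \<rho> z * \<rho> w"
      using rep unfolding is_rep_def by auto
    then have "\<rho> (z \<otimes> w) = c \<cdot>\<^sub>m \<rho> w"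
      using c mult_smult_assoc_mat[OF one_carrier_mat w] by simp
    then show ?thesis using c w \<open>n > 0\<close> by simp
  qed
  moreover have "\<rho> \<one> $$ (0,0) = 1" using rep \<open>n > 0\<close> unfolding is_rep_def by simp
  ultimately show ?thesis unfolding multiplicative_on_def by blast
qed

lemma proj_faithful_direct_sum_central_eq_one:
  assumes irr: "\<forall>\<rho>\<in>set \<rho>s. irreducible_rep G \<rho>" and pf: "proj_faithful G (direct_sum_rep \<rho>s)"
    and z: "z \<in> center G" and same: "\<forall>\<rho>\<in>set \<rho>s. \<rho> z $$ (0,0) = c"
  shows "z = \<one>\<^bsub>G\<^esub>"
proof -
  have "\<exists>m. \<rho> z = c \<cdot>\<^sub>m 1\<^sub>m m" if \<rho>: "\<rho> \<in> set \<rho>s" for \<rho>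
  proof -
    have irr\<rho>: "irreducible_rep G \<rho>" using irr \<rho> by blast
    from irreducible_rep_central_scalar[OF irr\<rho> z]
    obtain d where d: "\<rho> z = d \<cdot>\<^sub>m 1\<^sub>m (rep_deg G \<rho>)" ..
    have "rep_deg G \<rho> > 0" using irr\<rho> unfolding irreducible_rep_def Let_def by blast
    moreover have "\<rho> z $$ (0,0) = c" using same \<rho> by blast
    ultimately have "d = c" using d by simp
    with d show ?thesis by blast
  qed
  then have "\<forall>A\<in>set (map (\<lambda>\<rho>. \<rho> z) \<rho>s). \<exists>m. A = c \<cdot>\<^sub>m 1\<^sub>m m" by auto
  then have "direct_sum_rep \<rho>s z = c \<cdot>\<^sub>m 1\<^sub>m (dim_row (direct_sum_rep \<rho>s z))"
    unfolding direct_sum_rep_def by (rule diag_block_mat_smult_one)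
  then have "is_scalar_mat (direct_sum_rep \<rho>s z)" unfolding is_scalar_mat_def by blast
  then show ?thesis using pf z unfolding proj_faithful_def center_def by blast
qed

(* The empty direct sum is the 0 x 0 matrix, which counts as scalar. *)
lemma comm_group_if_proj_faithful_Nil:
  assumes G: "group G" and pf: "proj_faithful G (direct_sum_rep [])"
  shows "comm_group G"
proof (rule group.group_comm_groupI[OF G])
  have trivial: "g = \<one>\<^bsub>G\<^esub>" if "g \<in> carrier G" for g
  proof -
    have "is_scalar_mat (direct_sum_rep [] g)"
      unfolding direct_sum_rep_def is_scalar_mat_def by (auto intro!: exI[of _ 0] eq_matI)
    then show ?thesis using pf that unfolding proj_faithful_def by blast
  qed
  fix x y assume "x \<in> carrier G" "y \<in> carrier G"
  then show "x \<otimes>\<^bsub>G\<^esub> y = y \<otimes>\<^bsub>G\<^esub> x" using trivial[of x] trivial[of y] by simp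
qed

lemma subgroup_rank_center_less_length:
  assumes pg: "p_group G p" and nc: "\<not> comm_group G"
    and irr: "\<forall>\<rho>\<in>set \<rho>s. irreducible_rep G \<rho>" and pf: "proj_faithful G (direct_sum_rep \<rho>s)"
  shows "subgroup_rank G (center G) < length \<rho>s"
proof -
  interpret group G using pg unfolding p_group_def by blast
  obtain m where order: "Coset.order G = p ^ m" and p: "Factorial_Ring.prime p"
    using pg unfolding p_group_def Coset.order_def by blast
  obtain \<rho>0 rest where \<rho>s: "\<rho>s = \<rho>0 # rest"
    using comm_group_if_proj_faithful_Nil[OF is_group] pf nc by (cases \<rho>s) auto
  define fs where "fs = map (\<lambda>\<rho> z. \<rho> z $$ (0,0) / \<rho>0 z $$ (0,0)) rest"
  have "\<forall>f\<in>set fs. multiplicative_on G (center G) f"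
    using irr \<rho>s unfolding fs_def
    by (auto intro!: multiplicative_on_divide multiplicative_on_center_rep)
  moreover have "\<forall>z\<in>center G. (\<forall>f\<in>set fs. f z = 1) \<longrightarrow> z = \<one>\<^bsub>G\<^esub>"
  proof (intro ballI impI)
    fix z assume z: "z \<in> center G" and "\<forall>f\<in>set fs. f z = 1"
    then have "\<forall>\<rho>\<in>set \<rho>s. \<rho> z $$ (0,0) = \<rho>0 z $$ (0,0)"
      using \<rho>s unfolding fs_def by (auto simp: divide_eq_1_iff)
    then show "z = \<one>\<^bsub>G\<^esub>"
      using proj_faithful_direct_sum_central_eq_one[OF irr pf z] by blast
  qed
  ultimately have "subgroup_rank G (center G) \<le> length fs"
    using subgroup_rank_le_separating_multiplicative[OF order p center_subgroup] by blast
  then show ?thesis using \<rho>s fs_def by simp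
qed

theorem lemma6p1:
  fixes G :: "('g, 'b) monoid_scheme" and p :: nat and \<rho>s :: "('g \<Rightarrow> complex mat) list"
  assumes "p_group G p"
    and "\<not> comm_group G"
    and "\<forall>\<rho> \<in> set \<rho>s. irreducible_rep G \<rho>"
    and "proj_faithful G (direct_sum_rep \<rho>s)"
  shows "(\<not> (subgroup_generated G (center G) \<cong> Z2 \<times>\<times> Z2) \<and>
          \<not> (subgroup_generated G (center G) \<cong> Z2 \<times>\<times> Z2 \<times>\<times> Z2 \<times>\<times> Z2)
            \<longrightarrow> length \<rho>s > subgroup_rank G (center G))
       \<and> ((subgroup_generated G (center G) \<cong> Z2 \<times>\<times> Z2) \<or>
          (subgroup_generated G (center G) \<cong> Z2 \<times>\<times> Z2 \<times>\<times> Z2 \<times>\<times> Z2)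
            \<longrightarrow> int (length \<rho>s) > int (subgroup_rank G (center G)) - 1)"
  using subgroup_rank_center_less_length[OF assms] by simp

end
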